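(* Let $\delta\in(0,1)$ and $0\le p<\delta$. Then for every $n\ge1$ and every nonempty $\mathcal{A}_n\subseteq\{+,-\}^n$, the frame erasure rate satisfies $P_e(\mathcal{A}_n)>p$, whereas uncoded transmission ($n=0$) has frame erasure rate $p$. Consequently, for any finite set $\mathcal N=\{0,1,\dots,n_{\max}\}$ and any choice of nonempty information sets, $\arg\min_{n\in\mathcal N}P_e(\mathcal A_n)=0$.
   Context: Random erasure-indicator vectors $\mathbf{E}_{s,\delta}=(E^{(\mathbf{u})}_{s,\delta})_{\mathbf{u}\in\{+,-\}^s}$ are defined recursively: $E^{(\emptyset)}_{0,\delta}\sim$ Bernoulli$(p)$; given $\mathbf{E}_{s-1,\delta}$, take two independent copies $\mathbf{E}',\mathbf{E}''$ and i.i.d. Bernoulli$(\delta)$ variables $\Delta^{(\mathbf{u})}_s$ independent of them; for $\mathbf{t}\in\{+,-\}^{s-1}$ with $A=E'^{(\mathbf{t})}+E''^{(\mathbf{t})}-E'^{(\mathbf{t})}E''^{(\mathbf{t})}$ and $B=E'^{(\mathbf{t})}E''^{(\mathbf{t})}$, set $E^{(\mathbf{t}-)}_{s,\delta}=A+(1-A)\Delta^{(\mathbf{t}-)}_s$ and $E^{(\mathbf{t}+)}_{s,\delta}=B+(1-B)\Delta^{(\mathbf{t}+)}_s$. For a polar code of length $2^n$ over BEC$(p)$ with information set $\mathcal{A}_n\subseteq\{+,-\}^n$, decoded by a faulty SC decoder whose internal messages are independently erased with probability $\delta$, the frame erasure rate is $P_e(\mathcal{A}_n)=\Pr\big(\exists\,\mathbf{s}\in\mathcal{A}_n: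 E^{(\mathbf{s})}_{n,\delta}=1\big)$; for $n=0$ (uncoded transmission) it equals $p$. *)

theory Defs
  imports "HOL-Probability.Probability"
begin

datatype sign = Plus | Minus

text \<open>Index vectors u in {+,-}^s are lists of length s; t- / t+ is t with the sign appended.
  A realisation of E_{s,delta} is a function bool-valued on lists of length s
  (True = erased), extended by False elsewhere.\<close>

definition idx :: "nat \<Rightarrow> sign list set" where
  "idx s = {u. length u = s}"

primrec Evec :: "real \<Rightarrow> real \<Rightarrow> nat \<Rightarrow> (sign list \<Rightarrow> bool) pmf" where
  "Evec p \<delta> 0 = map_pmf (\<lambda>b u. if u = [] then b else False) (bernoulli_pmf p)"
| "Evec p \<delta> (Suc s) =
     do { E1 \<leftarrow> Evec p \<delta> s;
          E2 \<leftarrow> Evec p \<delta> s;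
          D \<leftarrow> Pi_pmf (idx (Suc s)) False (\<lambda>_. bernoulli_pmf \<delta>);
          return_pmf (\<lambda>u. if length u = Suc s then
             (let t = butlast u; A = E1 t \<or> E2 t; B = E1 t \<and> E2 t in
               if last u = Minus then A \<or> D u else B \<or> D u)
           else False) }"

definition FER :: "real \<Rightarrow> real \<Rightarrow> nat \<Rightarrow> sign list set \<Rightarrow> real" where
  "FER p \<delta> n A = measure_pmf.prob (Evec p \<delta> n) {e. \<exists>s\<in>A. e s}"

end

theory Submission
  imports Defs
begin

text \<open>At every level \<open>s \<ge> 1\<close> each erasure indicator is the disjunction of some event with its own
  fresh fault \<open>\<Delta>\<close>, so it is erased with probability at least \<open>\<delta>\<close>; hence for \<open>n \<ge> 1\<close> the frame
  erasure rate is at least \<open>\<delta> > p\<close>, while uncoded transmission achieves exactly \<open>p\<close>.\<close>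

lemma emeasure_bind_pmf_ge:
  assumes "\<And>x. x \<in> set_pmf M \<Longrightarrow> c \<le> emeasure (measure_pmf (N x)) X"
  shows "c \<le> emeasure (measure_pmf (bind_pmf M N)) X"
  unfolding emeasure_bind_pmf
  by (rule measure_pmf.nn_integral_ge_const) (auto intro!: AE_pmfI assms)

lemma finite_idx: "finite (idx n)"
proof -
  have "(UNIV :: sign set) = {Plus, Minus}"
    using sign.exhaust by auto
  then have "finite (UNIV :: sign set)"
    by (metis finite.emptyI finite_insert)
  then have "finite {xs :: sign list. set xs \<subseteq> UNIV \<and> length xs = n}"
    by (rule finite_lists_length_eq)
  then show ?thesis
    by (simp add: idx_def)
qed

lemma emeasure_Pi_pmf_bernoulli_component:
  assumes "finite I" "i \<in> I" "0 \<le> d" "d \<le> 1"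
  shows "emeasure (measure_pmf (Pi_pmf I dflt (\<lambda>_. bernoulli_pmf d))) {f. f i} = ennreal d"
proof -
  have "emeasure (measure_pmf (Pi_pmf I dflt (\<lambda>_. bernoulli_pmf d))) {f. f i}
      = emeasure (measure_pmf (map_pmf (\<lambda>f. f i) (Pi_pmf I dflt (\<lambda>_. bernoulli_pmf d)))) {True}"
    by (simp add: vimage_def)
  also have "\<dots> = emeasure (measure_pmf (bernoulli_pmf d)) {True}"
    using assms by (simp add: Pi_pmf_component)
  also have "\<dots> = ennreal d"
    using assms by (simp add: emeasure_pmf_single)
  finally show ?thesis .
qed

lemma Evec_erasure_ge_delta:
  assumes "0 \<le> \<delta>" "\<delta> \<le> 1" "length u = Suc s"
  shows "ennreal \<delta> \<le> emeasure (measure_pmf (Evec p \<delta> (Suc s))) {e. e u}"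
  unfolding Evec.simps
proof (rule emeasure_bind_pmf_ge, rule emeasure_bind_pmf_ge)
  fix E1 E2 :: "sign list \<Rightarrow> bool"
  let ?D = "Pi_pmf (idx (Suc s)) False (\<lambda>_. bernoulli_pmf \<delta>)"
  let ?g = "\<lambda>D u. if length u = Suc s then
             (let t = butlast u; A = E1 t \<or> E2 t; B = E1 t \<and> E2 t in
               if last u = Minus then A \<or> D u else B \<or> D u)
           else False"
  have "ennreal \<delta> = emeasure (measure_pmf ?D) {D. D u}"
    using emeasure_Pi_pmf_bernoulli_component[OF finite_idx, of u "Suc s"] assms
    by (simp add: idx_def)
  also have "\<dots> \<le> emeasure (measure_pmf ?D) (?g -` {e. e u})"
    by (rule emeasure_mono) (auto simp: assms Let_def)
  also have "\<dots> = emeasure (measure_pmf (?D \<bind> (\<lambda>D. return_pmf (?g D)))) {e. e u}"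
    by (simp add: map_pmf_def[symmetric])
  finally show "ennreal \<delta> \<le> emeasure (measure_pmf (?D \<bind> (\<lambda>D. return_pmf (?g D)))) {e. e u}" .
qed

lemma FER_ge_delta:
  assumes "0 \<le> \<delta>" "\<delta> \<le> 1" "n \<ge> 1" "A \<noteq> {}" "A \<subseteq> idx n"
  shows "\<delta> \<le> FER p \<delta> n A"
proof -
  obtain u where u: "u \<in> A"
    using assms by auto
  obtain s where n: "n = Suc s"
    using assms by (cases n) auto
  have "length u = Suc s"
    using u assms(5) n by (auto simp: idx_def)
  then have "ennreal \<delta> \<le> emeasure (measure_pmf (Evec p \<delta> n)) {e. e u}"
    unfolding n by (rule Evec_erasure_ge_delta[OF assms(1,2)])
  also have "\<dots> \<le> emeasure (measure_pmf (Evec p \<delta> n)) {e. \<exists>s\<in>A. e s}"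
    using u by (intro emeasure_mono) auto
  finally show ?thesis
    by (simp add: FER_def measure_pmf.emeasure_eq_measure ennreal_le_iff)
qed

lemma FER_uncoded:
  assumes "0 \<le> p" "p \<le> 1"
  shows "FER p \<delta> 0 {[]} = p"
proof -
  have "{b. b} = {True}"
    by auto
  then have "FER p \<delta> 0 {[]} = measure_pmf.prob (bernoulli_pmf p) {True}"
    by (simp add: FER_def vimage_def)
  also have "\<dots> = p"
    using assms by (simp add: measure_pmf_single)
  finally show ?thesis .
qed

lemma argmin_eq_zero_if_zero_strict_min:
  fixes f :: "nat \<Rightarrow> 'a :: linorder"
  assumes "\<And>n. 1 \<le> n \<Longrightarrow> n \<le> nmax \<Longrightarrow> f 0 < f n"
  shows "{n \<in> {0..nmax}. \<forall>m \<in> {0..nmax}. f n \<le> f m} = {0}"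
proof -
  have "f 0 \<le> f m" if "m \<le> nmax" for m
    using assms[of m] that by (cases "m = 0") auto
  moreover have "\<not> f n \<le> f 0" if "1 \<le> n" "n \<le> nmax" for n
    using assms[OF that] by simp
  ultimately show ?thesis
    by (auto simp: Suc_le_eq) (metis atLeastAtMost_iff gr0I zero_le)
qed

theorem proposition7:
  fixes p \<delta> :: real
  assumes "0 < \<delta>" "\<delta> < 1" "0 \<le> p" "p < \<delta>"
  shows "(\<forall>n \<ge> 1. \<forall>A. A \<noteq> {} \<and> A \<subseteq> idx n \<longrightarrow> FER p \<delta> n A > p)
       \<and> FER p \<delta> 0 {[]} = p
       \<and> (\<forall>nmax (As :: nat \<Rightarrow> sign list set).
            (\<forall>n \<le> nmax. As n \<noteq> {} \<and> As n \<subseteq> idx n) \<longrightarrow>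
            {n \<in> {0..nmax}. \<forall>m \<in> {0..nmax}. FER p \<delta> n (As n) \<le> FER p \<delta> m (As m)} = {0})"
proof -
  have coded: "FER p \<delta> n A > p" if "n \<ge> 1" "A \<noteq> {}" "A \<subseteq> idx n" for n A
    using FER_ge_delta[of \<delta> n A p] that assms by linarith
  have uncoded: "FER p \<delta> 0 {[]} = p"
    using FER_uncoded assms by simp
  have "{n \<in> {0..nmax}. \<forall>m \<in> {0..nmax}. FER p \<delta> n (As n) \<le> FER p \<delta> m (As m)} = {0}"
    if As: "\<forall>n \<le> nmax. As n \<noteq> {} \<and> As n \<subseteq> idx n" for nmax As
  proof (rule argmin_eq_zero_if_zero_strict_min)
    have "As 0 = {[]}"
      using As by (auto simp: idx_def)
    then show "FER p \<delta> 0 (As 0) < FER p \<delta> n (As n)" if "1 \<le> n" "n \<le> nmax" for n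
      using coded[OF \<open>1 \<le> n\<close>] As that uncoded by auto
  qed
  with coded uncoded show ?thesis
    by blast
qed

end
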